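(* Let $\sigma_1\prec\dots\prec\sigma_m$ be sign strings, $\varphi\in\mathbb{R}$, and suppose $\gamma\in\mathscr{M}(Q)$ is $(\varphi,\varepsilon_j)$-quasicritical of type $\sigma_j$ for each $j\in[m]$, where $\varepsilon_j\in(0,\pi/4)$. Then $\varepsilon_{j+1}>2\varepsilon_j$ for each $j\in[m-1]$.
   Context: $[n]=\{1,\dots,n\}$; signs $\pm$ are identified with $\pm1$. A sign string is $\sigma:[l]\to\{\pm1\}$, $l\ge2$, with alternating consecutive values; $|\sigma|=l$; $\sigma_1\prec\sigma_2$ means $\sigma_1\neq\sigma_2$ and $\sigma_1=\sigma_2\circ f$ for some strictly increasing $f$. Fix $Q=(q,z)\in\mathbb{C}\times\mathbb{S}^1$, $z\ne-1$, $\theta_1\in(-\pi,\pi)$ with $e^{i\theta_1}=z$, and $r\ge2$. $\mathscr{M}(Q)$ is the space of regular $C^r$ curves $\gamma:[0,1]\to\mathbb{C}$ with $\gamma(0)=0$, unit tangent $\mathbf{t}_\gamma(0)=1$, $\gamma(1)=q$, $\mathbf{t}_\gamma(1)=z$, curvature $\kappa_\gamma\in(-1,1)$ everywhere, and $\theta_\gamma(1)=\theta_1$, where $\theta_\gamma$ is the continuous argument of $\mathbf{t}_\gamma$ with $\theta_\gamma(0)=0$. For $\varphi\in\mathbb{R}$ write $\varphi_\pm=\varphi\pm\pi/2$. Stretchability: for $\kappa_0\in(0,1)$ and $r_0,r_b\in\mathbb{R}$, $b>0$, let $F(u)=u/\sqrt{1-u^2}$ ($|u|<1$), $F=+\infty$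 for $u\ge1$, $-\infty$ for $u\le-1$; $g_\pm(x)=F(\pm\kappa_0x+r_0/\sqrt{1+r_0^2})$, $h_\pm(x)=F(\mp\kappa_0(x-b)+r_b/\sqrt{1+r_b^2})$; $\lambda_+$ (resp. $\lambda_-$) is the common real value of $g_+,h_+$ (resp. $g_-,h_-$) where their graphs meet, or $+\infty$ (resp. $-\infty$) if they do not. If $I\subset[0,1]$ is a closed interval and $\langle\mathbf{t}_\gamma(t),e^{i\psi}\rangle>0$ on $I$, then after translating and rotating by $-\psi$, $\gamma|_I$ is the graph $x\mapsto(x,y(x))$, $x\in[0,b]$; put $f=y'$, $r_0=f(0)$, $r_b=f(b)$. $\gamma|_I$ is $\kappa_0$-stretchable with respect to $e^{i\psi}$ if $|\kappa_\gamma|\le\kappa_0$ on $I$ and $0\in[\lambda_-,\lambda_+]$; it is stretchable with respect to $e^{i\psi}$ (or w.r.t. $\psi$) if it is $\kappa_0$-stretchable for some $\kappa_0\in(0,1)$. Quasicritical: for a sign string $\sigma$, $n=|\sigma|$, $\varphi\in\mathbb{R}$, $\varepsilon\in(0,\pi/4)$, $\gamma$ is $(\varphi,\varepsilon)$-quasicritical of type $\sigma$ if there are closed intervals $J_1<\dots<J_n$ in $[0,1]$ such that for each $k\in[n]$: (i) $\theta_\gamma(J_k)\subset(\varphi_-+2\varepsilon,\varphi_++\varepsilon)$ if $\sigma(k)=+$ and $\theta_\gamma(J_k)\subset(\varphi_--\varepsilon,\varphi_+-2\varepsilon)$ if $\sigma(k)=-$; (ii) $|\theta_\gamma(t)-\varphi|<\pi/2-2\varepsilon$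 for all $t\notin\operatorname{Int}(\bigcup_kJ_k)$; (iii) $J_k$ contains a closed subinterval $I_k$ with $|\theta_\gamma(t)-\varphi_{\sigma(k)}|<\varepsilon$ for all $t\in I_k$ and $\gamma|_{I_k}$ stretchable with respect to $\varphi_{\sigma(k)}$. *)

theory Defs
  imports "HOL-Analysis.Analysis"
begin

text \<open>A sign string of length l is represented as a list of length l (0-indexed),
  entries in {1,-1}, consecutive entries alternating.\<close>

definition sign_string :: "int list \<Rightarrow> bool" where
  "sign_string s \<longleftrightarrow> length s \<ge> 2 \<and> set s \<subseteq> {1, -1} \<and>
     (\<forall>i. Suc i < length s \<longrightarrow> s ! Suc i = - (s ! i))"

definition sign_prec :: "int list \<Rightarrow> int list \<Rightarrow> bool" where
  "sign_prec s1 s2 \<longleftrightarrow> s1 \<noteq> s2 \<and>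
     (\<exists>f. strict_mono_on {..<length s1} f \<and> f ` {..<length s1} \<subseteq> {..<length s2} \<and>
          (\<forall>k<length s1. s1 ! k = s2 ! f k))"

definition Cr_on01 :: "nat \<Rightarrow> (real \<Rightarrow> complex) \<Rightarrow> bool" where
  "Cr_on01 r \<gamma> \<longleftrightarrow> (\<exists>D :: nat \<Rightarrow> real \<Rightarrow> complex. D 0 = \<gamma> \<and>
     (\<forall>k<r. \<forall>t\<in>{0..1}. (D k has_vector_derivative D (Suc k) t) (at t within {0..1})) \<and>
     continuous_on {0..1} (D r))"

definition dcurve :: "(real \<Rightarrow> complex) \<Rightarrow> real \<Rightarrow> complex" where
  "dcurve \<gamma> t = vector_derivative \<gamma> (at t within {0..1})"

definition ddcurve :: "(real \<Rightarrow> complex) \<Rightarrow> real \<Rightarrow> complex" where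
  "ddcurve \<gamma> t = vector_derivative (dcurve \<gamma>) (at t within {0..1})"

definition unit_tangent :: "(real \<Rightarrow> complex) \<Rightarrow> real \<Rightarrow> complex" where
  "unit_tangent \<gamma> t = dcurve \<gamma> t / complex_of_real (cmod (dcurve \<gamma> t))"

definition curvature :: "(real \<Rightarrow> complex) \<Rightarrow> real \<Rightarrow> real" where
  "curvature \<gamma> t = Im (cnj (dcurve \<gamma> t) * ddcurve \<gamma> t) / cmod (dcurve \<gamma> t) ^ 3"

definition theta :: "(real \<Rightarrow> complex) \<Rightarrow> real \<Rightarrow> real" where
  "theta \<gamma> = (THE \<theta>. continuous_on {0..1} \<theta> \<and> \<theta> 0 = 0 \<and>
                      (\<forall>t\<in>{0..1}. cis (\<theta> t) = unit_tangent \<gamma> t) \<and>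
                      (\<forall>t. t \<notin> {0..1} \<longrightarrow> \<theta> t = 0))"

text \<open>The space M(Q), Q = (q,z), with theta1 the chosen argument of z and regularity C^r.\<close>
definition in_MQ :: "nat \<Rightarrow> complex \<Rightarrow> complex \<Rightarrow> real \<Rightarrow> (real \<Rightarrow> complex) \<Rightarrow> bool" where
  "in_MQ r q z \<theta>1 \<gamma> \<longleftrightarrow> Cr_on01 r \<gamma> \<and> (\<forall>t\<in>{0..1}. dcurve \<gamma> t \<noteq> 0) \<and>
     \<gamma> 0 = 0 \<and> unit_tangent \<gamma> 0 = 1 \<and> \<gamma> 1 = q \<and> unit_tangent \<gamma> 1 = z \<and>
     (\<forall>t\<in>{0..1}. \<bar>curvature \<gamma> t\<bar> < 1) \<and> theta \<gamma> 1 = \<theta>1"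

definition Fst :: "real \<Rightarrow> ereal" where
  "Fst u = (if u \<ge> 1 then \<infinity> else if u \<le> -1 then -\<infinity> else ereal (u / sqrt (1 - u\<^sup>2)))"

definition meet_value :: "(real \<Rightarrow> ereal) \<Rightarrow> (real \<Rightarrow> ereal) \<Rightarrow> real \<Rightarrow> ereal \<Rightarrow> ereal" where
  "meet_value g h b dflt =
     (if \<exists>x\<in>{0..b}. \<exists>v::real. g x = ereal v \<and> h x = ereal v
      then ereal (SOME v. \<exists>x\<in>{0..b}. g x = ereal v \<and> h x = ereal v) else dflt)"

definition lam_plus :: "real \<Rightarrow> real \<Rightarrow> real \<Rightarrow> real \<Rightarrow> ereal" where
  "lam_plus \<kappa>0 r0 rb b = meet_value
     (\<lambda>x. Fst (\<kappa>0 * x + r0 / sqrt (1 + r0\<^sup>2)))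
     (\<lambda>x. Fst (- \<kappa>0 * (x - b) + rb / sqrt (1 + rb\<^sup>2))) b \<infinity>"

definition lam_minus :: "real \<Rightarrow> real \<Rightarrow> real \<Rightarrow> real \<Rightarrow> ereal" where
  "lam_minus \<kappa>0 r0 rb b = meet_value
     (\<lambda>x. Fst (- \<kappa>0 * x + r0 / sqrt (1 + r0\<^sup>2)))
     (\<lambda>x. Fst (\<kappa>0 * (x - b) + rb / sqrt (1 + rb\<^sup>2))) b (-\<infinity>)"

text \<open>gamma restricted to I = [a,c], rotated by -psi and translated, is the graph of y over
  [0,b] with b = Re(e^{-i psi}(gamma c - gamma a)); f = y' has f(0) = r0, f(b) = rb given by the
  slope of the rotated tangent.\<close>
definition kappa0_stretchable :: "real \<Rightarrow> (real \<Rightarrow> complex) \<Rightarrow> real \<Rightarrow> real \<Rightarrow> real \<Rightarrow> bool" where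
  "kappa0_stretchable \<kappa>0 \<gamma> \<psi> a c \<longleftrightarrow>
     (let w0 = cis (- \<psi>) * dcurve \<gamma> a; wb = cis (- \<psi>) * dcurve \<gamma> c;
          r0 = Im w0 / Re w0; rb = Im wb / Re wb;
          b = Re (cis (- \<psi>) * (\<gamma> c - \<gamma> a))
      in (\<forall>t\<in>{a..c}. \<bar>curvature \<gamma> t\<bar> \<le> \<kappa>0) \<and>
         lam_minus \<kappa>0 r0 rb b \<le> 0 \<and> 0 \<le> lam_plus \<kappa>0 r0 rb b)"

definition stretchable :: "(real \<Rightarrow> complex) \<Rightarrow> real \<Rightarrow> real \<Rightarrow> real \<Rightarrow> bool" where
  "stretchable \<gamma> \<psi> a c \<longleftrightarrow> a \<le> c \<and> {a..c} \<subseteq> {0..1} \<and>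
     (\<forall>t\<in>{a..c}. inner (unit_tangent \<gamma> t) (cis \<psi>) > 0) \<and>
     (\<exists>\<kappa>0. 0 < \<kappa>0 \<and> \<kappa>0 < 1 \<and> kappa0_stretchable \<kappa>0 \<gamma> \<psi> a c)"

text \<open>J_k = [a k, c k] for k < length s (0-indexed); sign s!k; phi_{+-} = phi +- pi/2.\<close>
definition quasicritical :: "(real \<Rightarrow> complex) \<Rightarrow> real \<Rightarrow> real \<Rightarrow> int list \<Rightarrow> bool" where
  "quasicritical \<gamma> \<phi> \<epsilon> s \<longleftrightarrow> 0 < \<epsilon> \<and> \<epsilon> < pi / 4 \<and>
     (\<exists>a c :: nat \<Rightarrow> real.
        (\<forall>k<length s. 0 \<le> a k \<and> a k \<le> c k \<and> c k \<le> 1) \<and>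
        (\<forall>k. Suc k < length s \<longrightarrow> c k < a (Suc k)) \<and>
        (\<forall>k<length s. \<forall>t\<in>{a k..c k}.
           (if s ! k = 1 then theta \<gamma> t \<in> {\<phi> - pi/2 + 2*\<epsilon> <..< \<phi> + pi/2 + \<epsilon>}
            else theta \<gamma> t \<in> {\<phi> - pi/2 - \<epsilon> <..< \<phi> + pi/2 - 2*\<epsilon>})) \<and>
        (\<forall>t\<in>{0..1}. t \<notin> interior (\<Union>k<length s. {a k..c k}) \<longrightarrow>
           \<bar>theta \<gamma> t - \<phi>\<bar> < pi/2 - 2*\<epsilon>) \<and>
        (\<forall>k<length s. \<exists>a' c'. a k \<le> a' \<and> a' \<le> c' \<and> c' \<le> c k \<and>
           (\<forall>t\<in>{a'..c'}. \<bar>theta \<gamma> t - (\<phi> + of_int (s ! k) * pi / 2)\<bar> < \<epsilon>) \<and>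
           stretchable \<gamma> (\<phi> + of_int (s ! k) * pi / 2) a' c'))"

end

theory Submission
  imports Defs
begin

text \<open>
  Let \<gamma> be (\<phi>,e)-quasicritical of type s and (\<phi>,e')-quasicritical of
  type s' with e' \<le> 2e.  Condition (iii) for s' yields increasing times t_0 < t_1 < ... at which
  the tangent angle is e'-close to \<phi> + s'_k \<pi>/2.  Conditions (i) and (ii) for s say that every
  time where the angle is (strictly) 2e-close to \<phi> \<plusminus> \<pi>/2 lies in one of the ordered intervals
  J_i, and that the sign of that interval is the sign \<plusminus>.  Sending k to the index of the interval
  containing t_k gives a monotone map which is strict because signs alternate; hence s' is a
  subsequence of s.  If e_{j+1} \<le> 2 e_j, then \<sigma>_{j+1} embeds into \<sigma>_j while \<sigma>_j \<prec> \<sigma>_{j+1}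
  embeds \<sigma>_j into \<sigma>_{j+1}; by antisymmetry of embeddings \<sigma>_j = \<sigma>_{j+1}, contradicting \<prec>.
\<close>

definition embeds :: "'a list \<Rightarrow> 'a list \<Rightarrow> bool" where
  "embeds s t \<longleftrightarrow> (\<exists>f. strict_mono_on {..<length s} f \<and> f ` {..<length s} \<subseteq> {..<length t} \<and>
                        (\<forall>k<length s. s ! k = t ! f k))"

lemma sign_prec_iff_embeds: "sign_prec s t \<longleftrightarrow> s \<noteq> t \<and> embeds s t"
  unfolding sign_prec_def embeds_def by blast

lemma strict_mono_on_gap:
  fixes f :: "nat \<Rightarrow> nat"
  assumes "strict_mono_on {..<n} f" and "k + i < n"
  shows "f k + i \<le> f (k + i)"
  using assms(2)
proof (induction i)
  case (Suc i)
  then have "f k + i \<le> f (k + i)" by simp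
  also have "\<dots> < f (k + Suc i)"
    using assms(1) Suc.prems by (auto intro: strict_mono_onD)
  finally show ?case by simp
qed simp

lemma embeds_length: "embeds s t \<Longrightarrow> length s \<le> length t"
proof (cases "s = []")
  case False
  assume "embeds s t"
  then obtain f where f: "strict_mono_on {..<length s} f" "f ` {..<length s} \<subseteq> {..<length t}"
    unfolding embeds_def by blast
  have "f 0 + (length s - 1) \<le> f (length s - 1)"
    using strict_mono_on_gap[OF f(1), of 0 "length s - 1"] False by simp
  moreover have "f (length s - 1) < length t" using f(2) False by (simp add: image_subset_iff)
  ultimately show ?thesis by linarith
qed simp

text \<open>Embedding is antisymmetric: an increasing self-map of {..<n} is the identity.\<close>
lemma embeds_antisym:
  assumes st: "embeds s t" and ts: "embeds t s"
  shows "s = t"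
proof -
  let ?n = "length s"
  have len: "length t = ?n" using embeds_length[OF st] embeds_length[OF ts] by simp
  obtain f where f: "strict_mono_on {..<?n} f" "f ` {..<?n} \<subseteq> {..<?n}"
      "\<forall>k<?n. s ! k = t ! f k"
    using st len unfolding embeds_def by auto
  have fix_f: "f k = k" if "k < ?n" for k
  proof -
    have "f 0 + k \<le> f k" using strict_mono_on_gap[OF f(1), of 0 k] that by simp
    moreover have "f k + (?n - 1 - k) \<le> f (?n - 1)"
      using strict_mono_on_gap[OF f(1), of k "?n - 1 - k"] that by simp
    moreover have "f (?n - 1) < ?n" using f(2) that by (simp add: image_subset_iff)
    ultimately show ?thesis using that by linarith
  qed
  show ?thesis
    by (rule nth_equalityI) (use len f(3) fix_f in auto)
qed

definition interval_chain :: "nat \<Rightarrow> (nat \<Rightarrow> real) \<Rightarrow> (nat \<Rightarrow> real) \<Rightarrow> bool" where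
  "interval_chain n a c \<longleftrightarrow> (\<forall>k<n. a k \<le> c k) \<and> (\<forall>k. Suc k < n \<longrightarrow> c k < a (Suc k))"

lemma interval_chain_separated:
  assumes "interval_chain n a c" and "i < j" and "j < n"
  shows "c i < a j"
  using assms(2,3)
proof (induction j)
  case (Suc j)
  show ?case
  proof (cases "i = j")
    case False
    then have "c i < a j" using Suc by simp
    also have "\<dots> \<le> c j" using assms(1) Suc.prems unfolding interval_chain_def by simp
    also have "\<dots> < a (Suc j)" using assms(1) Suc.prems unfolding interval_chain_def by simp
    finally show ?thesis .
  qed (use assms(1) Suc.prems in \<open>simp add: interval_chain_def\<close>)
qed simp

lemma interval_chain_index_mono:
  assumes "interval_chain n a c" and "i < n" and "x \<in> {a i..c i}" and "y \<in> {a j..c j}"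
    and "x < y"
  shows "i \<le> j"
proof (rule ccontr)
  assume "\<not> i \<le> j"
  then have "c j < a i" using interval_chain_separated[OF assms(1)] assms(2) by simp
  with assms(3-5) show False by simp
qed

abbreviation sign_angle :: "real \<Rightarrow> int \<Rightarrow> real" where
  "sign_angle \<phi> \<sigma> \<equiv> \<phi> + of_int \<sigma> * pi / 2"

lemma sign_string_entry: "sign_string s \<Longrightarrow> k < length s \<Longrightarrow> s ! k = 1 \<or> s ! k = -1"
  unfolding sign_string_def using nth_mem by fastforce

lemma quasicritical_sign_times:
  assumes "quasicritical \<gamma> \<phi> e s"
  obtains t where "strict_mono_on {..<length s} t"
    and "\<And>k. k < length s \<Longrightarrow> t k \<in> {0..1} \<and> \<bar>theta \<gamma> (t k) - sign_angle \<phi> (s ! k)\<bar> < e"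
proof -
  obtain a c where ac: "\<forall>k<length s. 0 \<le> a k \<and> a k \<le> c k \<and> c k \<le> 1"
    and sep: "\<forall>k. Suc k < length s \<longrightarrow> c k < a (Suc k)"
    and close: "\<forall>k<length s. \<exists>a' c'. a k \<le> a' \<and> a' \<le> c' \<and> c' \<le> c k \<and>
           (\<forall>t\<in>{a'..c'}. \<bar>theta \<gamma> t - sign_angle \<phi> (s ! k)\<bar> < e) \<and>
           stretchable \<gamma> (sign_angle \<phi> (s ! k)) a' c'"
    using assms unfolding quasicritical_def by blast
  have chain: "interval_chain (length s) a c"
    unfolding interval_chain_def using ac sep by simp
  have "\<forall>k\<in>{..<length s}. \<exists>x. x \<in> {a k..c k} \<and> \<bar>theta \<gamma> x - sign_angle \<phi> (s ! k)\<bar> < e"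
  proof
    fix k assume "k \<in> {..<length s}"
    then obtain a' c' where "a k \<le> a'" "a' \<le> c'" "c' \<le> c k"
        "\<forall>t\<in>{a'..c'}. \<bar>theta \<gamma> t - sign_angle \<phi> (s ! k)\<bar> < e"
      using close by blast
    then show "\<exists>x. x \<in> {a k..c k} \<and> \<bar>theta \<gamma> x - sign_angle \<phi> (s ! k)\<bar> < e"
      by (intro exI[of _ a']) auto
  qed
  from bchoice[OF this] obtain t where t_all: "\<forall>k\<in>{..<length s}.
      t k \<in> {a k..c k} \<and> \<bar>theta \<gamma> (t k) - sign_angle \<phi> (s ! k)\<bar> < e"
    by blast
  then have t: "t k \<in> {a k..c k}" "\<bar>theta \<gamma> (t k) - sign_angle \<phi> (s ! k)\<bar> < e"
    if "k < length s" for k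
    using that by auto
  have "strict_mono_on {..<length s} t"
  proof (rule strict_mono_onI)
    fix k k' assume "k \<in> {..<length s}" "k' \<in> {..<length s}" "k < k'"
    then have "t k \<le> c k" "c k < a k'" "a k' \<le> t k'"
      using interval_chain_separated[OF chain, of k k'] t(1)[of k] t(1)[of k'] by auto
    then show "t k < t k'" by linarith
  qed
  moreover have "t k \<in> {0..1}" if "k < length s" for k
    using t(1)[OF that] ac that by auto
  ultimately show ?thesis using that t(2) by blast
qed

lemma quasicritical_covers:
  assumes "quasicritical \<gamma> \<phi> e s" and "sign_string s"
  obtains a c where "interval_chain (length s) a c"
    and "\<And>x \<sigma>. x \<in> {0..1} \<Longrightarrow> \<sigma> = 1 \<or> \<sigma> = -1 \<Longrightarrow> \<bar>theta \<gamma> x - sign_angle \<phi> \<sigma>\<bar> < 2 * e \<Longrightarrow>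
           \<exists>i<length s. x \<in> {a i..c i} \<and> s ! i = \<sigma>"
proof -
  obtain a c where ac: "\<forall>k<length s. 0 \<le> a k \<and> a k \<le> c k \<and> c k \<le> 1"
    and sep: "\<forall>k. Suc k < length s \<longrightarrow> c k < a (Suc k)"
    and signs: "\<forall>k<length s. \<forall>t\<in>{a k..c k}.
           (if s ! k = 1 then theta \<gamma> t \<in> {\<phi> - pi/2 + 2*e <..< \<phi> + pi/2 + e}
            else theta \<gamma> t \<in> {\<phi> - pi/2 - e <..< \<phi> + pi/2 - 2*e})"
    and outside: "\<forall>t\<in>{0..1}. t \<notin> interior (\<Union>k<length s. {a k..c k}) \<longrightarrow>
           \<bar>theta \<gamma> t - \<phi>\<bar> < pi/2 - 2*e"
    using assms(1) unfolding quasicritical_def by blast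
  have chain: "interval_chain (length s) a c"
    unfolding interval_chain_def using ac sep by simp
  have cover: "\<exists>i<length s. x \<in> {a i..c i} \<and> s ! i = \<sigma>"
    if x: "x \<in> {0..1}" and \<sigma>: "\<sigma> = 1 \<or> \<sigma> = -1"
      and near: "\<bar>theta \<gamma> x - sign_angle \<phi> \<sigma>\<bar> < 2 * e" for x \<sigma>
  proof -
    have "\<not> \<bar>theta \<gamma> x - \<phi>\<bar> < pi/2 - 2*e" using \<sigma> near by auto
    then have "x \<in> (\<Union>k<length s. {a k..c k})"
      using outside x interior_subset by blast
    then obtain i where i: "i < length s" "x \<in> {a i..c i}" by blast
    have "if s ! i = 1 then theta \<gamma> x \<in> {\<phi> - pi/2 + 2*e <..< \<phi> + pi/2 + e}
          else theta \<gamma> x \<in> {\<phi> - pi/2 - e <..< \<phi> + pi/2 - 2*e}"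
      using signs i by blast
    then have "s ! i = \<sigma>"
      using sign_string_entry[OF assms(2) i(1)] \<sigma> near by (auto split: if_splits)
    with i show ?thesis by blast
  qed
  from that[OF chain cover] show ?thesis .
qed

lemma quasicritical_embeds:
  assumes Q: "quasicritical \<gamma> \<phi> e s" and Q': "quasicritical \<gamma> \<phi> e' s'" and le: "e' \<le> 2 * e"
    and S: "sign_string s" and S': "sign_string s'"
  shows "embeds s' s"
proof -
  obtain t where t_mono: "strict_mono_on {..<length s'} t"
    and t: "\<And>k. k < length s' \<Longrightarrow> t k \<in> {0..1} \<and> \<bar>theta \<gamma> (t k) - sign_angle \<phi> (s' ! k)\<bar> < e'"
    using quasicritical_sign_times[OF Q'] by blast
  obtain a c where chain: "interval_chain (length s) a c"
    and cover: "\<And>x \<sigma>. x \<in> {0..1} \<Longrightarrow> \<sigma> = 1 \<or> \<sigma> = -1 \<Longrightarrow>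
           \<bar>theta \<gamma> x - sign_angle \<phi> \<sigma>\<bar> < 2 * e \<Longrightarrow> \<exists>i<length s. x \<in> {a i..c i} \<and> s ! i = \<sigma>"
    using quasicritical_covers[OF Q S] by blast
  have "\<forall>k\<in>{..<length s'}. \<exists>i. i < length s \<and> t k \<in> {a i..c i} \<and> s ! i = s' ! k"
  proof
    fix k assume "k \<in> {..<length s'}"
    then have k: "k < length s'" by simp
    then have "\<bar>theta \<gamma> (t k) - sign_angle \<phi> (s' ! k)\<bar> < 2 * e" using t[of k] le by linarith
    then show "\<exists>i. i < length s \<and> t k \<in> {a i..c i} \<and> s ! i = s' ! k"
      using cover[of "t k" "s' ! k"] t[OF k] sign_string_entry[OF S' k] by blast
  qed
  from bchoice[OF this] obtain g where "\<forall>k\<in>{..<length s'}.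
      g k < length s \<and> t k \<in> {a (g k)..c (g k)} \<and> s ! g k = s' ! k"
    by blast
  then have g: "g k < length s \<and> t k \<in> {a (g k)..c (g k)} \<and> s ! g k = s' ! k"
    if "k < length s'" for k
    using that by simp
  have g_mono: "g k \<le> g k'" if "k \<le> k'" "k' < length s'" for k k'
  proof (cases "k = k'")
    case False
    then have "t k < t k'" using t_mono that by (auto intro: strict_mono_onD)
    moreover have "g k < length s" "t k \<in> {a (g k)..c (g k)}" "t k' \<in> {a (g k')..c (g k')}"
      using g[of k] g[of k'] that by auto
    ultimately show ?thesis using interval_chain_index_mono[OF chain] by blast
  qed simp
  text \<open>Consecutive times carry opposite signs, so they lie in different intervals.\<close>
  have g_step: "g k < g (Suc k)" if "Suc k < length s'" for k
  proof -
    have "s' ! Suc k = - (s' ! k)" using S' that unfolding sign_string_def by blast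
    then have "s' ! Suc k \<noteq> s' ! k" using sign_string_entry[OF S', of k] that by auto
    then have "g k \<noteq> g (Suc k)" using g[of k] g[of "Suc k"] that by auto
    with g_mono[of k "Suc k"] that show ?thesis by simp
  qed
  have "strict_mono_on {..<length s'} g"
  proof (rule strict_mono_onI)
    fix k k' assume "k \<in> {..<length s'}" "k' \<in> {..<length s'}" "k < k'"
    then show "g k < g k'" using g_step[of k] g_mono[of "Suc k" k'] by simp
  qed
  then show ?thesis unfolding embeds_def using g by (intro exI[of _ g]) auto
qed

theorem lemma3p7:
  fixes q z :: complex and \<theta>1 :: real and r :: nat and \<gamma> :: "real \<Rightarrow> complex"
    and m :: nat and \<sigma> :: "nat \<Rightarrow> int list" and \<phi> :: real and \<epsilon> :: "nat \<Rightarrow> real"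
  assumes "cmod z = 1" and "z \<noteq> -1" and "-pi < \<theta>1" and "\<theta>1 < pi" and "cis \<theta>1 = z"
    and "r \<ge> 2"
    and "in_MQ r q z \<theta>1 \<gamma>"
    and "\<forall>j\<in>{1..m}. sign_string (\<sigma> j)"
    and "\<forall>j\<in>{1..<m}. sign_prec (\<sigma> j) (\<sigma> (Suc j))"
    and "\<forall>j\<in>{1..m}. 0 < \<epsilon> j \<and> \<epsilon> j < pi / 4"
    and "\<forall>j\<in>{1..m}. quasicritical \<gamma> \<phi> (\<epsilon> j) (\<sigma> j)"
  shows "\<forall>j\<in>{1..<m}. \<epsilon> (Suc j) > 2 * \<epsilon> j"
proof
  fix j assume j: "j \<in> {1..<m}"
  then have j_range: "j \<in> {1..m}" "Suc j \<in> {1..m}" by auto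
  have prec: "\<sigma> j \<noteq> \<sigma> (Suc j)" "embeds (\<sigma> j) (\<sigma> (Suc j))"
    using assms(9) j sign_prec_iff_embeds by blast+
  show "\<epsilon> (Suc j) > 2 * \<epsilon> j"
  proof (rule ccontr)
    assume "\<not> \<epsilon> (Suc j) > 2 * \<epsilon> j"
    then have "embeds (\<sigma> (Suc j)) (\<sigma> j)"
      using quasicritical_embeds assms(8,11) j_range by (meson not_less)
    with prec show False using embeds_antisym by blast
  qed
qed

end
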